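(* In the setting of the context, with probability at least $1-\delta/4$, for all $t\ge1$ and all $\mathbf x\in\mathcal D$, $$\big|\overline\zeta_t(\mathbf x)-\widetilde\zeta_t(\mathbf x)\big|\le\nu_t\,\alpha,\qquad \alpha\triangleq\sum_{i=1}^M\omega_i\frac{N_i}{\sigma^2}\Big(2\sqrt{2\sigma^2\log\tfrac{8N_i}{\delta}}+d_i\Big).$$
   Context: Setting. $\mathcal D\subset\mathbb R^D$ is a finite set; $k$ is a squared-exponential kernel with $k(\mathbf x,\mathbf x')\le1$. Target $f$ and meta-functions $f_1,\dots,f_M$ lie in the RKHS of $k$ with norms at most $B$. Target observations $y_t=f(\mathbf x_t)+\epsilon_t$, $\epsilon_t$ i.i.d. $\mathcal N(0,\sigma^2)$. Meta-task $i$ has fixed meta-observations $(\mathbf x_{i,j},y_{i,j})$, $j=1,\dots,N_i$, with $y_{i,j}=f_i(\mathbf x_{i,j})+\epsilon_{i,j}$, $\epsilon_{i,j}$ i.i.d. $\mathcal N(0,\sigma^2)$. Function gap $d_i\triangleq\max_{j}|f(\mathbf x_{i,j})-f_i(\mathbf x_{i,j})|$. Posteriors: target $\mu_t(\mathbf x)=\mathbf k_t(\mathbf x)^\top(\mathbf K_t+\lambda I)^{-1}\mathbf y_t$, $\sigma_t^2(\mathbf x)=k(\mathbf x,\mathbf x)-\mathbf k_t(\mathbf x)^\top(\mathbf K_t+\lambda I)^{-1}\mathbf k_t(\mathbf x)$ (Gram matrix/vector of the first $t$ queried inputs). Meta-task $i$: $\overline\mu_i(\mathbf x)=\mathbf k_i(\mathbf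 x)^\top(\mathbf K_i+\sigma^2I)^{-1}\overline{\mathbf y}_i$, $\overline\sigma_i^2(\mathbf x)=k(\mathbf x,\mathbf x)-\mathbf k_i(\mathbf x)^\top(\mathbf K_i+\sigma^2I)^{-1}\mathbf k_i(\mathbf x)$, where $\mathbf K_i=[k(\mathbf x_{i,j},\mathbf x_{i,j'})]$, $\mathbf k_i(\mathbf x)=[k(\mathbf x_{i,j},\mathbf x)]_j$, $\overline{\mathbf y}_i=[y_{i,j}]_j$. Parameters: $\tau>0$, $\beta_t>0$, $\nu_t\in[0,1]$ for all $t$, $\omega_i\ge0$ with $\sum_i\omega_i=1$. Acquisition functions. $\overline\zeta_t(\mathbf x)=\nu_t\sum_{i=1}^M\omega_i[\overline\mu_i(\mathbf x)+\tau\overline\sigma_i(\mathbf x)]+(1-\nu_t)[\mu_{t-1}(\mathbf x)+\beta_t\sigma_{t-1}(\mathbf x)]$. Auxiliary: let $\widetilde y_{i,j}=f(\mathbf x_{i,j})+\widetilde\epsilon_{i,j}$ be hypothetical noisy target observations at the meta-inputs, $\widetilde\epsilon_{i,j}$ i.i.d. $\mathcal N(0,\sigma^2)$ independent of everything else; $\widetilde\mu_i$, $\widetilde\sigma_i$ are computed like $\overline\mu_i,\overline\sigma_i$ with $\overline{\mathbf y}_i$ replaced by $\widetilde{\mathbf y}_i=[\widetilde y_{i,j}]_j$ (so $\widetilde\sigma_i=\overline\sigma_i$), and $\widetilde\zeta_t(\mathbf x)=\nu_t\sum_{i=1}^M\omega_i[\widetilde\mu_i(\mathbf x)+\tau\widetilde\sigma_i(\mathbf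 x)]+(1-\nu_t)[\mu_{t-1}(\mathbf x)+\beta_t\sigma_{t-1}(\mathbf x)]$. *)

theory Defs
  imports "HOL-Probability.Probability" "Jordan_Normal_Form.Gauss_Jordan_Elimination"
begin

(* squared-exponential kernel with signal variance s (assumed 0 < s <= 1, so k <= 1)
   and lengthscale l *)
definition se_kernel :: "real \<Rightarrow> real \<Rightarrow> real ^ 'd \<Rightarrow> real ^ 'd \<Rightarrow> real" where
  "se_kernel s l x x' = s * exp (- (norm (x - x'))\<^sup>2 / (2 * l\<^sup>2))"

definition gram_mat :: "('a \<Rightarrow> 'a \<Rightarrow> real) \<Rightarrow> 'a list \<Rightarrow> real mat" where
  "gram_mat k xs = mat (length xs) (length xs) (\<lambda>(i,j). k (xs ! i) (xs ! j))"

definition kvec :: "('a \<Rightarrow> 'a \<Rightarrow> real) \<Rightarrow> 'a list \<Rightarrow> 'a \<Rightarrow> real vec" where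
  "kvec k xs x = vec (length xs) (\<lambda>j. k (xs ! j) x)"

definition reg_inv :: "('a \<Rightarrow> 'a \<Rightarrow> real) \<Rightarrow> real \<Rightarrow> 'a list \<Rightarrow> real mat" where
  "reg_inv k lam xs = the (mat_inverse (gram_mat k xs + lam \<cdot>\<^sub>m 1\<^sub>m (length xs)))"

definition post_mean :: "('a \<Rightarrow> 'a \<Rightarrow> real) \<Rightarrow> real \<Rightarrow> 'a list \<Rightarrow> real list \<Rightarrow> 'a \<Rightarrow> real" where
  "post_mean k lam xs ys x = kvec k xs x \<bullet> (reg_inv k lam xs *\<^sub>v vec_of_list ys)"

definition post_var :: "('a \<Rightarrow> 'a \<Rightarrow> real) \<Rightarrow> real \<Rightarrow> 'a list \<Rightarrow> 'a \<Rightarrow> real" where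
  "post_var k lam xs x = k x x - kvec k xs x \<bullet> (reg_inv k lam xs *\<^sub>v kvec k xs x)"

definition post_sd :: "('a \<Rightarrow> 'a \<Rightarrow> real) \<Rightarrow> real \<Rightarrow> 'a list \<Rightarrow> 'a \<Rightarrow> real" where
  "post_sd k lam xs x = sqrt (post_var k lam xs x)"

definition meta_inputs :: "(nat \<Rightarrow> nat \<Rightarrow> 'a) \<Rightarrow> (nat \<Rightarrow> nat) \<Rightarrow> nat \<Rightarrow> 'a list" where
  "meta_inputs xm N i = map (xm i) [0..<N i]"

(* acquisition function zeta_t with given meta-task observation lists Y i,
   target history (first t-1 queried inputs Xh, observations Yh) *)
definition acq ::
  "('a \<Rightarrow> 'a \<Rightarrow> real) \<Rightarrow> real \<Rightarrow> real \<Rightarrow> real \<Rightarrow> real \<Rightarrow> real \<Rightarrow> nat \<Rightarrow> (nat \<Rightarrow> real)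
   \<Rightarrow> (nat \<Rightarrow> 'a list) \<Rightarrow> (nat \<Rightarrow> real list) \<Rightarrow> 'a list \<Rightarrow> real list \<Rightarrow> 'a \<Rightarrow> real" where
  "acq k sig lam tau beta nu M w Xm Ym Xh Yh x =
     nu * (\<Sum>i<M. w i * (post_mean k (sig\<^sup>2) (Xm i) (Ym i) x
                           + tau * post_sd k (sig\<^sup>2) (Xm i) x))
     + (1 - nu) * (post_mean k lam Xh Yh x + beta * post_sd k lam Xh x)"

end

(*
  The two acquisition functions differ only in the meta-task posterior means, which are linear
  in the meta-observations: the gap is nu_t * sum_i w_i k_i(x)^T (K_i + sig^2 I)^-1 (ybar_i - ytil_i).
  Positive semidefiniteness of the kernel gives |(K_i + sig^2 I)^-1 v| <= |v| / sig^2, and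
  k <= 1 gives |k_i(x)| <= sqrt N_i, so the i-th term is at most
  N_i / sig^2 * (max_j |eps_ij - epst_ij| + d_i).

  The noise part is handled by a weighted Chernoff bound. With a_i = sqrt(2 sig^2 log(8 N_i/delta))
  and t_i = a_i / (2 sig^2), Gaussian exponential moments give
  E exp(t_i (max_j |eps_ij - epst_ij| - 2 a_i)) <= delta/4 for every task; convexity of exp with
  weights proportional to w_i N_i / t_i merges these into a single Markov inequality for the
  weighted sum, so no union bound over the M tasks (and no independence) is needed.
*)

theory Submission
  imports Defs "Jordan_Normal_Form.Determinant"
begin

no_notation Finite_Cartesian_Product.vec_nth (infixl \<open>$\<close> 90)

section \<open>Exponential moments of Gaussian noise\<close>

lemma exp_abs_diff_le:
  fixes t x y :: real
  assumes "0 \<le> t"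
  shows "exp (t * \<bar>x - y\<bar>) \<le> (exp (2*t*x) + exp (-2*t*x) + exp (2*t*y) + exp (-2*t*y)) / 2"
proof -
  have exp_abs: "exp \<bar>u\<bar> \<le> exp u + exp (- u)" for u :: real
    by (cases "u \<ge> 0") (simp_all add: add_increasing add_increasing2)
  have "exp (t * \<bar>x - y\<bar>) \<le> exp (t * \<bar>x\<bar>) * exp (t * \<bar>y\<bar>)"
    using assms abs_triangle_ineq4[of x y]
    by (simp add: exp_add[symmetric] distrib_left[symmetric] mult_left_mono)
  also have "\<dots> \<le> ((exp (t * \<bar>x\<bar>))\<^sup>2 + (exp (t * \<bar>y\<bar>))\<^sup>2) / 2"
    using sum_squares_bound[of "exp (t * \<bar>x\<bar>)" "exp (t * \<bar>y\<bar>)"] by simp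
  also have "\<dots> = (exp \<bar>2*t*x\<bar> + exp \<bar>2*t*y\<bar>) / 2"
    using assms by (simp add: exp_double[symmetric] abs_mult mult.assoc)
  also have "\<dots> \<le> (exp (2*t*x) + exp (-2*t*x) + exp (2*t*y) + exp (-2*t*y)) / 2"
    using exp_abs[of "2*t*x"] exp_abs[of "2*t*y"] by simp
  finally show ?thesis .
qed

lemma nn_integral_exp_normal:
  fixes \<sigma> s :: real
  assumes "0 < \<sigma>" and "distributed P lborel X (normal_density 0 \<sigma>)"
  shows "(\<integral>\<^sup>+\<omega>. ennreal (exp (s * X \<omega>)) \<partial>P) = ennreal (exp (\<sigma>\<^sup>2 * s\<^sup>2 / 2))"
proof -
  have shift: "exp (s * x) * normal_density 0 \<sigma> x = exp (\<sigma>\<^sup>2 * s\<^sup>2 / 2) * normal_density (\<sigma>\<^sup>2 * s) \<sigma> x"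
    for x
  proof -
    have "s * x + - (x - 0)\<^sup>2 / (2 * \<sigma>\<^sup>2) = \<sigma>\<^sup>2 * s\<^sup>2 / 2 + - (x - \<sigma>\<^sup>2 * s)\<^sup>2 / (2 * \<sigma>\<^sup>2)"
      using assms(1) by (simp add: field_simps power2_eq_square)
    then have "exp (s * x) * exp (- (x - 0)\<^sup>2 / (2 * \<sigma>\<^sup>2))
        = exp (\<sigma>\<^sup>2 * s\<^sup>2 / 2) * exp (- (x - \<sigma>\<^sup>2 * s)\<^sup>2 / (2 * \<sigma>\<^sup>2))"
      by (metis exp_add)
    then show ?thesis
      unfolding normal_density_def by (metis (no_types, lifting) mult.left_commute)
  qed
  have "(\<integral>\<^sup>+\<omega>. ennreal (exp (s * X \<omega>)) \<partial>P)
      = (\<integral>\<^sup>+x. ennreal (normal_density 0 \<sigma> x) * ennreal (exp (s * x)) \<partial>lborel)"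
    using distributed_nn_integral[OF assms(2), of "\<lambda>x. ennreal (exp (s * x))"] by simp
  also have "\<dots> = (\<integral>\<^sup>+x. ennreal (exp (\<sigma>\<^sup>2 * s\<^sup>2 / 2)) * ennreal (normal_density (\<sigma>\<^sup>2 * s) \<sigma> x) \<partial>lborel)"
    by (intro nn_integral_cong) (metis shift ennreal_mult' mult.commute normal_density_nonneg)
  also have "\<dots> = ennreal (exp (\<sigma>\<^sup>2 * s\<^sup>2 / 2)) * (\<integral>\<^sup>+x. ennreal (normal_density (\<sigma>\<^sup>2 * s) \<sigma> x) \<partial>lborel)"
    by (rule nn_integral_cmult) simp
  also have "(\<integral>\<^sup>+x. ennreal (normal_density (\<sigma>\<^sup>2 * s) \<sigma> x) \<partial>lborel) = 1"
    using assms(1) by (subst nn_integral_eq_integral) auto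
  finally show ?thesis by simp
qed

lemma nn_integral_exp_abs_diff_normal:
  fixes \<sigma> t :: real
  assumes "0 < \<sigma>" "0 \<le> t"
    and X: "distributed P lborel X (normal_density 0 \<sigma>)"
    and Y: "distributed P lborel Y (normal_density 0 \<sigma>)"
  shows "(\<integral>\<^sup>+\<omega>. ennreal (exp (t * \<bar>X \<omega> - Y \<omega>\<bar>)) \<partial>P) \<le> ennreal (2 * exp (2 * \<sigma>\<^sup>2 * t\<^sup>2))"
proof -
  have [measurable]: "X \<in> borel_measurable P" "Y \<in> borel_measurable P"
    using distributed_measurable[OF X] distributed_measurable[OF Y] by simp_all
  define e where "e = ennreal (exp (2 * \<sigma>\<^sup>2 * t\<^sup>2))"
  have mgf: "(\<integral>\<^sup>+\<omega>. ennreal (exp (s * Z \<omega>)) \<partial>P) = e"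
    if "distributed P lborel Z (normal_density 0 \<sigma>)" "s = 2*t \<or> s = -2*t" for Z s
  proof -
    have "\<sigma>\<^sup>2 * s\<^sup>2 / 2 = 2 * \<sigma>\<^sup>2 * t\<^sup>2" using that(2) by (auto simp: power2_eq_square)
    then show ?thesis unfolding e_def using nn_integral_exp_normal[OF assms(1) that(1)] by simp
  qed
  define S where "S \<omega> = exp (2*t*X \<omega>) + exp (-2*t*X \<omega>) + exp (2*t*Y \<omega>) + exp (-2*t*Y \<omega>)"
    for \<omega>
  have "(\<integral>\<^sup>+\<omega>. ennreal (exp (t * \<bar>X \<omega> - Y \<omega>\<bar>)) \<partial>P) \<le> (\<integral>\<^sup>+\<omega>. ennreal (1/2 * S \<omega>) \<partial>P)"
    using exp_abs_diff_le[OF assms(2)] by (intro nn_integral_mono ennreal_leI) (simp add: S_def)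
  also have "\<dots> = (\<integral>\<^sup>+\<omega>. ennreal (1/2) * ennreal (S \<omega>) \<partial>P)"
    by (intro nn_integral_cong ennreal_mult) (simp_all add: S_def)
  also have "\<dots> = ennreal (1/2) * (e + e + e + e)"
  proof -
    have "(\<integral>\<^sup>+\<omega>. ennreal (exp (2*t * X \<omega>)) \<partial>P) = e" "(\<integral>\<^sup>+\<omega>. ennreal (exp (-2*t * X \<omega>)) \<partial>P) = e"
      "(\<integral>\<^sup>+\<omega>. ennreal (exp (2*t * Y \<omega>)) \<partial>P) = e" "(\<integral>\<^sup>+\<omega>. ennreal (exp (-2*t * Y \<omega>)) \<partial>P) = e"
      by (rule mgf; simp add: X Y)+
    then show ?thesis
      by (simp add: S_def nn_integral_cmult nn_integral_add)
  qed
  also have "e + e + e + e = ennreal (4 * exp (2 * \<sigma>\<^sup>2 * t\<^sup>2))"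
    unfolding e_def by (simp add: ennreal_plus[symmetric] del: ennreal_plus)
  also have "ennreal (1/2) * \<dots> = ennreal (2 * exp (2 * \<sigma>\<^sup>2 * t\<^sup>2))"
    by (subst ennreal_mult[symmetric]) simp_all
  finally show ?thesis .
qed

lemma exp_Max_le_sum:
  fixes g :: "'a \<Rightarrow> real"
  assumes "finite J" "J \<noteq> {}" "0 \<le> t"
  shows "exp (t * Max (g ` J)) \<le> (\<Sum>j\<in>J. exp (t * g j))"
proof -
  have "Max (g ` J) \<in> g ` J"
    using assms by simp
  then obtain j where "j \<in> J" "Max (g ` J) = g j"
    by blast
  then show ?thesis
    using assms(1) by (auto intro: member_le_sum)
qed

lemma nn_integral_exp_Max_abs_diff_normal:
  fixes \<sigma> t :: real
  assumes "0 < \<sigma>" "0 \<le> t" "0 < n"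
    and X: "\<And>j. j < n \<Longrightarrow> distributed P lborel (X j) (normal_density 0 \<sigma>)"
    and Y: "\<And>j. j < n \<Longrightarrow> distributed P lborel (Y j) (normal_density 0 \<sigma>)"
  shows "(\<integral>\<^sup>+\<omega>. ennreal (exp (t * Max ((\<lambda>j. \<bar>X j \<omega> - Y j \<omega>\<bar>) ` {..<n}))) \<partial>P)
          \<le> ennreal (2 * real n * exp (2 * \<sigma>\<^sup>2 * t\<^sup>2))"
proof -
  have [measurable]: "X j \<in> borel_measurable P" "Y j \<in> borel_measurable P" if "j < n" for j
    using distributed_measurable[OF X[OF that]] distributed_measurable[OF Y[OF that]] by simp_all
  have "(\<integral>\<^sup>+\<omega>. ennreal (exp (t * Max ((\<lambda>j. \<bar>X j \<omega> - Y j \<omega>\<bar>) ` {..<n}))) \<partial>P)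
      \<le> (\<integral>\<^sup>+\<omega>. (\<Sum>j<n. ennreal (exp (t * \<bar>X j \<omega> - Y j \<omega>\<bar>))) \<partial>P)"
  proof (rule nn_integral_mono)
    fix \<omega>
    show "ennreal (exp (t * Max ((\<lambda>j. \<bar>X j \<omega> - Y j \<omega>\<bar>) ` {..<n})))
        \<le> (\<Sum>j<n. ennreal (exp (t * \<bar>X j \<omega> - Y j \<omega>\<bar>)))"
      using exp_Max_le_sum[of "{..<n}" t "\<lambda>j. \<bar>X j \<omega> - Y j \<omega>\<bar>"] assms(2,3)
      by (auto simp: sum_ennreal intro: ennreal_leI)
  qed
  also have "\<dots> = (\<Sum>j<n. \<integral>\<^sup>+\<omega>. ennreal (exp (t * \<bar>X j \<omega> - Y j \<omega>\<bar>)) \<partial>P)"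
    by (intro nn_integral_sum) auto
  also have "\<dots> \<le> (\<Sum>j<n. ennreal (2 * exp (2 * \<sigma>\<^sup>2 * t\<^sup>2)))"
    using nn_integral_exp_abs_diff_normal[OF assms(1,2) X Y] by (intro sum_mono) auto
  also have "\<dots> = ennreal (2 * real n * exp (2 * \<sigma>\<^sup>2 * t\<^sup>2))"
    by (simp add: ennreal_of_nat_eq_real_of_nat ennreal_mult'[symmetric] mult.assoc)
  finally show ?thesis .
qed

section \<open>A weighted Chernoff bound\<close>

lemma one_le_weighted_mean_exp:
  fixes c t z b :: "'i \<Rightarrow> real"
  assumes "finite I" and t: "\<And>i. i \<in> I \<Longrightarrow> 0 < t i" and c: "\<And>i. i \<in> I \<Longrightarrow> 0 \<le> c i"
    and excess: "(\<Sum>i\<in>I. c i * b i) < (\<Sum>i\<in>I. c i * z i)"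
  shows "1 \<le> (\<Sum>i\<in>I. c i / t i * exp (t i * (z i - b i))) / (\<Sum>i\<in>I. c i / t i)"
proof -
  define C where "C = (\<Sum>i\<in>I. c i / t i)"
  have C_pos: "0 < C"
  proof -
    have "\<exists>i\<in>I. c i \<noteq> 0"
      using excess by (metis (no_types, lifting) less_irrefl mult_eq_0_iff sum.cong)
    then obtain i where "i \<in> I" "0 < c i / t i"
      using c t by (metis divide_pos_pos order_le_less)
    then show ?thesis
      unfolding C_def using assms(1) c t by (intro sum_pos2) (auto intro: divide_nonneg_pos)
  qed
  have "C < C + ((\<Sum>i\<in>I. c i * z i) - (\<Sum>i\<in>I. c i * b i))"
    using excess by simp
  also have "\<dots> = (\<Sum>i\<in>I. c i / t i + (c i * z i - c i * b i))"
    unfolding C_def by (simp add: sum.distrib sum_subtractf)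
  also have "\<dots> = (\<Sum>i\<in>I. c i / t i * (1 + t i * (z i - b i)))"
  proof (intro sum.cong refl)
    fix i assume "i \<in> I"
    with t have "t i \<noteq> 0" by force
    then show "c i / t i + (c i * z i - c i * b i) = c i / t i * (1 + t i * (z i - b i))"
      by (simp add: field_simps)
  qed
  also have "\<dots> \<le> (\<Sum>i\<in>I. c i / t i * exp (t i * (z i - b i)))"
    using c t by (intro sum_mono mult_left_mono exp_ge_add_one_self) (auto intro: divide_nonneg_pos)
  finally show ?thesis
    using C_pos unfolding C_def by simp
qed

lemma nn_integral_weighted_mean_le:
  fixes u :: "'i \<Rightarrow> real" and F :: "'i \<Rightarrow> 'w \<Rightarrow> real"
  assumes "finite I" "0 \<le> \<epsilon>" and u: "\<And>i. i \<in> I \<Longrightarrow> 0 \<le> u i"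
    and F: "\<And>i. i \<in> I \<Longrightarrow> F i \<in> borel_measurable M" "\<And>i \<omega>. i \<in> I \<Longrightarrow> 0 \<le> F i \<omega>"
    and int_F: "\<And>i. i \<in> I \<Longrightarrow> (\<integral>\<^sup>+\<omega>. ennreal (F i \<omega>) \<partial>M) \<le> ennreal \<epsilon>"
  shows "(\<integral>\<^sup>+\<omega>. ennreal ((\<Sum>i\<in>I. u i * F i \<omega>) / (\<Sum>i\<in>I. u i)) \<partial>M) \<le> ennreal \<epsilon>"
proof -
  define C where "C = (\<Sum>i\<in>I. u i)"
  have C: "0 \<le> C"
    unfolding C_def using u by (rule sum_nonneg)
  have "(\<integral>\<^sup>+\<omega>. ennreal ((\<Sum>i\<in>I. u i * F i \<omega>) / C) \<partial>M)
      = (\<integral>\<^sup>+\<omega>. ennreal (1 / C) * (\<Sum>i\<in>I. ennreal (u i) * ennreal (F i \<omega>)) \<partial>M)"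
  proof (rule nn_integral_cong)
    fix \<omega>
    have "ennreal ((\<Sum>i\<in>I. u i * F i \<omega>) / C) = ennreal (1 / C) * ennreal (\<Sum>i\<in>I. u i * F i \<omega>)"
      using C u F(2) by (subst ennreal_mult[symmetric]) (auto intro!: sum_nonneg)
    also have "\<dots> = ennreal (1 / C) * (\<Sum>i\<in>I. ennreal (u i) * ennreal (F i \<omega>))"
      using u F(2) by (subst sum_ennreal[symmetric]) (auto simp: ennreal_mult)
    finally show "ennreal ((\<Sum>i\<in>I. u i * F i \<omega>) / C)
        = ennreal (1 / C) * (\<Sum>i\<in>I. ennreal (u i) * ennreal (F i \<omega>))" .
  qed
  also have "\<dots> = ennreal (1 / C) * (\<Sum>i\<in>I. ennreal (u i) * (\<integral>\<^sup>+\<omega>. ennreal (F i \<omega>) \<partial>M))"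
    using F(1) by (simp add: nn_integral_cmult nn_integral_sum)
  also have "\<dots> \<le> ennreal (1 / C) * (\<Sum>i\<in>I. ennreal (u i) * ennreal \<epsilon>)"
    using int_F by (intro mult_left_mono sum_mono) auto
  also have "\<dots> = ennreal (1 / C) * ennreal C * ennreal \<epsilon>"
    using u unfolding C_def by (simp add: sum_distrib_right[symmetric] sum_ennreal mult.assoc)
  also have "\<dots> \<le> ennreal \<epsilon>"
    using C by (cases "C = 0") (simp_all add: ennreal_mult[symmetric])
  finally show ?thesis
    unfolding C_def .
qed

lemma weighted_chernoff_bound:
  fixes Z :: "'i \<Rightarrow> 'w \<Rightarrow> real" and c t b :: "'i \<Rightarrow> real"
  assumes "prob_space P" "finite I" "0 \<le> \<epsilon>"
    and Z: "\<And>i. i \<in> I \<Longrightarrow> Z i \<in> borel_measurable P"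
    and t: "\<And>i. i \<in> I \<Longrightarrow> 0 < t i" and c: "\<And>i. i \<in> I \<Longrightarrow> 0 \<le> c i"
    and mgf: "\<And>i. i \<in> I \<Longrightarrow> (\<integral>\<^sup>+\<omega>. ennreal (exp (t i * (Z i \<omega> - b i))) \<partial>P) \<le> ennreal \<epsilon>"
  shows "measure P {\<omega> \<in> space P. (\<Sum>i\<in>I. c i * b i) < (\<Sum>i\<in>I. c i * Z i \<omega>)} \<le> \<epsilon>"
proof -
  interpret prob_space P by fact
  define W where "W \<omega> = (\<Sum>i\<in>I. c i / t i * exp (t i * (Z i \<omega> - b i))) / (\<Sum>i\<in>I. c i / t i)" for \<omega>
  have [measurable]: "W \<in> borel_measurable P"
    unfolding W_def using Z by measurable
  have "{\<omega> \<in> space P. (\<Sum>i\<in>I. c i * b i) < (\<Sum>i\<in>I. c i * Z i \<omega>)}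
      \<subseteq> {\<omega> \<in> space P. 1 \<le> 1 * ennreal (W \<omega>)}"
    using one_le_weighted_mean_exp[OF assms(2) t c] by (auto simp: W_def)
  then have "emeasure P {\<omega> \<in> space P. (\<Sum>i\<in>I. c i * b i) < (\<Sum>i\<in>I. c i * Z i \<omega>)}
      \<le> emeasure P {\<omega> \<in> space P. 1 \<le> 1 * ennreal (W \<omega>)}"
    by (rule emeasure_mono) measurable
  also have "\<dots> \<le> 1 * (\<integral>\<^sup>+\<omega>. ennreal (W \<omega>) * indicator (space P) \<omega> \<partial>P)"
    by (intro nn_integral_Markov_inequality) auto
  also have "\<dots> = (\<integral>\<^sup>+\<omega>. ennreal (W \<omega>) \<partial>P)"
    by (auto intro!: nn_integral_cong simp: indicator_def)
  also have "\<dots> \<le> ennreal \<epsilon>"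
    unfolding W_def using assms(2,3) t c Z mgf
    by (intro nn_integral_weighted_mean_le) (auto intro: divide_nonneg_pos)
  finally show ?thesis
    using assms(3) by (simp add: emeasure_eq_measure)
qed

lemma nn_integral_exp_Max_abs_diff_normal_level:
  fixes \<sigma> \<epsilon> :: real
  assumes "0 < \<sigma>" "0 < \<epsilon>" "\<epsilon> \<le> 1" "0 < n"
    and X: "\<And>j. j < n \<Longrightarrow> distributed P lborel (X j) (normal_density 0 \<sigma>)"
    and Y: "\<And>j. j < n \<Longrightarrow> distributed P lborel (Y j) (normal_density 0 \<sigma>)"
  defines "a \<equiv> sqrt (2 * \<sigma>\<^sup>2 * ln (2 * real n / \<epsilon>))"
  shows "(\<integral>\<^sup>+\<omega>. ennreal (exp (a / (2 * \<sigma>\<^sup>2) * (Max ((\<lambda>j. \<bar>X j \<omega> - Y j \<omega>\<bar>) ` {..<n}) - 2 * a))) \<partial>P)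
         \<le> ennreal \<epsilon>"
proof -
  define t where "t = a / (2 * \<sigma>\<^sup>2)"
  define m where "m \<omega> = Max ((\<lambda>j. \<bar>X j \<omega> - Y j \<omega>\<bar>) ` {..<n})" for \<omega>
  have [measurable]: "X j \<in> borel_measurable P" "Y j \<in> borel_measurable P" if "j < n" for j
    using distributed_measurable[OF X[OF that]] distributed_measurable[OF Y[OF that]] by simp_all
  have m_meas: "m \<in> borel_measurable P"
    unfolding m_def by measurable
  have "0 < ln (2 * real n / \<epsilon>)"
    using assms(2-4) by (simp add: field_simps)
  then have "0 \<le> t" and "2 * \<sigma>\<^sup>2 * t\<^sup>2 - 2 * a * t = - ln (2 * real n / \<epsilon>)"
    using assms(1) by (simp_all add: t_def a_def field_simps power2_eq_square)
  moreover have "exp (- ln (2 * real n / \<epsilon>)) = \<epsilon> / (2 * real n)"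
    using assms(2,4) by (subst exp_minus, subst exp_ln) auto
  ultimately have level: "2 * real n * exp (2 * \<sigma>\<^sup>2 * t\<^sup>2) * exp (- (2 * a * t)) = \<epsilon>"
    using assms(4) by (simp add: mult.assoc exp_add[symmetric])
  have "(\<integral>\<^sup>+\<omega>. ennreal (exp (t * (m \<omega> - 2 * a))) \<partial>P)
      = (\<integral>\<^sup>+\<omega>. ennreal (exp (t * m \<omega>)) * ennreal (exp (- (2 * a * t))) \<partial>P)"
    by (intro nn_integral_cong) (simp add: ennreal_mult[symmetric] exp_add[symmetric] algebra_simps)
  also have "\<dots> = (\<integral>\<^sup>+\<omega>. ennreal (exp (t * m \<omega>)) \<partial>P) * ennreal (exp (- (2 * a * t)))"
    using m_meas by (simp add: nn_integral_multc)
  also have "\<dots> \<le> ennreal (2 * real n * exp (2 * \<sigma>\<^sup>2 * t\<^sup>2)) * ennreal (exp (- (2 * a * t)))"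
    unfolding m_def using \<open>0 \<le> t\<close> assms(1,4) X Y
    by (intro mult_right_mono nn_integral_exp_Max_abs_diff_normal) auto
  also have "\<dots> = ennreal \<epsilon>"
    by (simp add: ennreal_mult[symmetric] level)
  finally show ?thesis
    unfolding t_def m_def .
qed

lemma measure_weighted_max_abs_diff_normal_ge:
  fixes X Y :: "'i \<Rightarrow> nat \<Rightarrow> 'w \<Rightarrow> real" and c :: "'i \<Rightarrow> real" and N :: "'i \<Rightarrow> nat"
  assumes "prob_space P" "finite I" "0 < \<sigma>" "0 < \<epsilon>" "\<epsilon> \<le> 1"
    and c: "\<And>i. i \<in> I \<Longrightarrow> 0 \<le> c i" and N: "\<And>i. i \<in> I \<Longrightarrow> 0 < N i"
    and X: "\<And>i j. i \<in> I \<Longrightarrow> j < N i \<Longrightarrow> distributed P lborel (X i j) (normal_density 0 \<sigma>)"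
    and Y: "\<And>i j. i \<in> I \<Longrightarrow> j < N i \<Longrightarrow> distributed P lborel (Y i j) (normal_density 0 \<sigma>)"
  shows "1 - \<epsilon> \<le> measure P {\<omega> \<in> space P.
           (\<Sum>i\<in>I. c i * Max ((\<lambda>j. \<bar>X i j \<omega> - Y i j \<omega>\<bar>) ` {..<N i}))
             \<le> (\<Sum>i\<in>I. c i * (2 * sqrt (2 * \<sigma>\<^sup>2 * ln (2 * real (N i) / \<epsilon>))))}"
proof -
  interpret prob_space P by fact
  define m where "m i \<omega> = Max ((\<lambda>j. \<bar>X i j \<omega> - Y i j \<omega>\<bar>) ` {..<N i})" for i \<omega>
  define a where "a i = sqrt (2 * \<sigma>\<^sup>2 * ln (2 * real (N i) / \<epsilon>))" for i
  define E where "E = {\<omega> \<in> space P. (\<Sum>i\<in>I. c i * (2 * a i)) < (\<Sum>i\<in>I. c i * m i \<omega>)}"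
  have [measurable]: "X i j \<in> borel_measurable P" "Y i j \<in> borel_measurable P"
    if "i \<in> I" "j < N i" for i j
    using distributed_measurable[OF X[OF that]] distributed_measurable[OF Y[OF that]] by simp_all
  have m_meas: "m i \<in> borel_measurable P" if "i \<in> I" for i
    unfolding m_def using that by measurable
  have t_pos: "0 < a i / (2 * \<sigma>\<^sup>2)" if "i \<in> I" for i
    using N[OF that] assms(3-5) by (simp add: a_def field_simps)
  have mgf: "(\<integral>\<^sup>+\<omega>. ennreal (exp (a i / (2 * \<sigma>\<^sup>2) * (m i \<omega> - 2 * a i))) \<partial>P) \<le> ennreal \<epsilon>"
    if "i \<in> I" for i
    unfolding a_def m_def
    by (rule nn_integral_exp_Max_abs_diff_normal_level[OF assms(3-5) N[OF that] X[OF that] Y[OF that]])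
  have "measure P E \<le> \<epsilon>"
    unfolding E_def using assms(4)
    by (intro weighted_chernoff_bound[OF assms(1,2) _ m_meas t_pos c mgf]) auto
  moreover have "E \<in> events"
    unfolding E_def using m_meas by measurable
  ultimately have "1 - \<epsilon> \<le> measure P (space P - E)"
    by (simp add: prob_compl)
  also have "space P - E = {\<omega> \<in> space P.
      (\<Sum>i\<in>I. c i * Max ((\<lambda>j. \<bar>X i j \<omega> - Y i j \<omega>\<bar>) ` {..<N i}))
        \<le> (\<Sum>i\<in>I. c i * (2 * sqrt (2 * \<sigma>\<^sup>2 * ln (2 * real (N i) / \<epsilon>))))}"
    unfolding E_def m_def a_def by auto
  finally show ?thesis .
qed

section \<open>Positive semidefiniteness of the squared-exponential kernel\<close>

definition pos_semidef_kernel :: "('a \<Rightarrow> 'a \<Rightarrow> real) \<Rightarrow> bool" where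
  "pos_semidef_kernel k \<longleftrightarrow>
     (\<forall>xs c. 0 \<le> (\<Sum>a<length xs. \<Sum>b<length xs. c a * c b * k (xs ! a) (xs ! b)))"

lemma sum_sum_inner_power_nonneg:
  fixes p :: "'i \<Rightarrow> 'a::euclidean_space" and c :: "'i \<Rightarrow> real"
  shows "0 \<le> (\<Sum>a\<in>A. \<Sum>b\<in>A. c a * c b * (inner (p a) (p b)) ^ n)"
proof (induction n arbitrary: c)
  case 0
  have "(\<Sum>a\<in>A. \<Sum>b\<in>A. c a * c b * (inner (p a) (p b)) ^ 0) = (\<Sum>a\<in>A. c a)\<^sup>2"
    by (simp add: power2_eq_square sum_product)
  then show ?case by simp
next
  case (Suc n)
  have "c a * c b * (inner (p a) (p b)) ^ Suc n
      = (\<Sum>e\<in>Basis. (c a * inner (p a) e) * (c b * inner (p b) e) * (inner (p a) (p b)) ^ n)" for a b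
  proof -
    have "(inner (p a) (p b)) ^ Suc n = (\<Sum>e\<in>Basis. inner (p a) e * inner (p b) e) * (inner (p a) (p b)) ^ n"
      by (subst euclidean_inner[symmetric]) simp
    then show ?thesis
      by (simp add: sum_distrib_left sum_distrib_right mult_ac)
  qed
  then have "(\<Sum>a\<in>A. \<Sum>b\<in>A. c a * c b * (inner (p a) (p b)) ^ Suc n)
      = (\<Sum>a\<in>A. \<Sum>b\<in>A. \<Sum>e\<in>Basis. (c a * inner (p a) e) * (c b * inner (p b) e) * (inner (p a) (p b)) ^ n)"
    by simp
  also have "\<dots> = (\<Sum>a\<in>A. \<Sum>e\<in>Basis. \<Sum>b\<in>A. (c a * inner (p a) e) * (c b * inner (p b) e) * (inner (p a) (p b)) ^ n)"
    by (intro sum.cong refl sum.swap)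
  also have "\<dots> = (\<Sum>e\<in>Basis. \<Sum>a\<in>A. \<Sum>b\<in>A. (c a * inner (p a) e) * (c b * inner (p b) e) * (inner (p a) (p b)) ^ n)"
    by (rule sum.swap)
  also have "\<dots> \<ge> 0"
    by (rule sum_nonneg) (rule Suc.IH)
  finally show ?case .
qed

lemma sum_sum_exp_inner_nonneg:
  fixes p :: "'i \<Rightarrow> 'a::euclidean_space" and c :: "'i \<Rightarrow> real"
  assumes "0 \<le> r"
  shows "0 \<le> (\<Sum>a\<in>A. \<Sum>b\<in>A. c a * c b * exp (r * inner (p a) (p b)))"
proof (rule sums_le[OF _ sums_zero])
  show "(\<lambda>n. \<Sum>a\<in>A. \<Sum>b\<in>A. c a * c b * ((r * inner (p a) (p b)) ^ n /\<^sub>R fact n))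
      sums (\<Sum>a\<in>A. \<Sum>b\<in>A. c a * c b * exp (r * inner (p a) (p b)))"
    by (intro sums_sum sums_mult exp_converges)
  fix n
  have "(\<Sum>a\<in>A. \<Sum>b\<in>A. c a * c b * ((r * inner (p a) (p b)) ^ n /\<^sub>R fact n))
      = r ^ n / fact n * (\<Sum>a\<in>A. \<Sum>b\<in>A. c a * c b * (inner (p a) (p b)) ^ n)"
    by (simp add: sum_distrib_left power_mult_distrib field_simps)
  also have "\<dots> \<ge> 0"
    using assms by (intro mult_nonneg_nonneg divide_nonneg_pos sum_sum_inner_power_nonneg) auto
  finally show "0 \<le> (\<Sum>a\<in>A. \<Sum>b\<in>A. c a * c b * ((r * inner (p a) (p b)) ^ n /\<^sub>R fact n))" .
qed

lemma pos_semidef_kernel_se_kernel: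
  assumes "0 \<le> s"
  shows "pos_semidef_kernel (se_kernel s l)"
  unfolding pos_semidef_kernel_def
proof (intro allI)
  fix xs :: "(real ^ 'd) list" and c :: "nat \<Rightarrow> real"
  define q where "q = 1 / (2 * l\<^sup>2)"
  define c' where "c' a = c a * exp (- q * inner (xs ! a) (xs ! a))" for a
  have factor: "se_kernel s l x y = s * (exp (- q * inner x x) * exp (- q * inner y y) * exp ((2 * q) * inner x y))"
    for x y :: "real ^ 'd"
  proof -
    have "(norm (x - y))\<^sup>2 = inner x x + inner y y - 2 * inner x y"
      by (simp add: power2_norm_eq_inner inner_diff_left inner_diff_right inner_commute)
    then have "- (norm (x - y))\<^sup>2 / (2 * l\<^sup>2) = - q * inner x x + - q * inner y y + (2 * q) * inner x y"
      unfolding q_def by (cases "l = 0") (simp_all add: field_simps)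
    then show ?thesis
      unfolding se_kernel_def by (simp only: exp_add)
  qed
  have "(\<Sum>a<length xs. \<Sum>b<length xs. c a * c b * se_kernel s l (xs ! a) (xs ! b))
      = s * (\<Sum>a<length xs. \<Sum>b<length xs. c' a * c' b * exp ((2 * q) * inner (xs ! a) (xs ! b)))"
    unfolding factor c'_def by (simp add: sum_distrib_left algebra_simps)
  also have "\<dots> \<ge> 0"
    using assms by (intro mult_nonneg_nonneg sum_sum_exp_inner_nonneg) (simp_all add: q_def)
  finally show "0 \<le> (\<Sum>a<length xs. \<Sum>b<length xs. c a * c b * se_kernel s l (xs ! a) (xs ! b))" .
qed

lemma abs_se_kernel_le_1:
  assumes "0 \<le> s" "s \<le> 1"
  shows "\<bar>se_kernel s l x y\<bar> \<le> 1"
proof -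
  have "exp (- (norm (x - y))\<^sup>2 / (2 * l\<^sup>2)) \<le> 1"
    by (simp add: divide_nonpos_nonneg)
  then show ?thesis
    unfolding se_kernel_def using assms by (simp add: abs_mult mult_le_one)
qed

section \<open>Regularised Gram matrices and posterior means\<close>

lemma scalar_prod_self_eq_sum: "(v :: real vec) \<bullet> v = (\<Sum>j<dim_vec v. (v $ j)\<^sup>2)"
  by (simp add: scalar_prod_def lessThan_atLeast0 power2_eq_square)

lemma abs_scalar_prod_le:
  fixes u v :: "real vec"
  assumes "u \<in> carrier_vec n" "v \<in> carrier_vec n"
  shows "\<bar>u \<bullet> v\<bar> \<le> sqrt (u \<bullet> u) * sqrt (v \<bullet> v)"
proof -
  have "\<bar>u \<bullet> v\<bar> \<le> (\<Sum>j<n. \<bar>u $ j\<bar> * \<bar>v $ j\<bar>)"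
    using assms by (simp add: scalar_prod_def lessThan_atLeast0 sum_abs[THEN order_trans] abs_mult)
  also have "\<dots> \<le> L2_set (\<lambda>j. u $ j) {..<n} * L2_set (\<lambda>j. v $ j) {..<n}"
    by (rule L2_set_mult_ineq)
  finally show ?thesis
    using assms by (simp add: L2_set_def scalar_prod_self_eq_sum)
qed

lemma scalar_prod_self_le:
  fixes v :: "real vec" and B :: real
  assumes "\<And>j. j < dim_vec v \<Longrightarrow> \<bar>v $ j\<bar> \<le> B"
  shows "v \<bullet> v \<le> dim_vec v * B\<^sup>2"
proof -
  have "(\<Sum>j<dim_vec v. (v $ j)\<^sup>2) \<le> (\<Sum>j<dim_vec v. B\<^sup>2)"
    using assms by (intro sum_mono) (metis abs_ge_zero lessThan_iff order_trans power2_abs power_mono)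
  then show ?thesis
    by (simp add: scalar_prod_self_eq_sum)
qed

lemma gram_mat_quadratic_form:
  assumes "u \<in> carrier_vec (length xs)"
  shows "u \<bullet> (gram_mat k xs *\<^sub>v u) = (\<Sum>a<length xs. \<Sum>b<length xs. u $ a * u $ b * k (xs ! a) (xs ! b))"
  using assms
  by (simp add: gram_mat_def scalar_prod_def lessThan_atLeast0 sum_distrib_left mult_ac)

lemma smult_one_mat_mult_vec:
  fixes u :: "'a::comm_ring_1 vec"
  assumes "u \<in> carrier_vec n"
  shows "(c \<cdot>\<^sub>m 1\<^sub>m n) *\<^sub>v u = c \<cdot>\<^sub>v u"
  using assms
  by (intro eq_vecI)
    (auto simp: scalar_prod_def sum.delta' lessThan_atLeast0[symmetric] if_distrib if_distribR cong: if_cong)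

lemma reg_gram_quadratic_form_ge:
  assumes "pos_semidef_kernel k" and u: "u \<in> carrier_vec (length xs)"
  shows "lam * (u \<bullet> u) \<le> u \<bullet> ((gram_mat k xs + lam \<cdot>\<^sub>m 1\<^sub>m (length xs)) *\<^sub>v u)"
proof -
  have "gram_mat k xs \<in> carrier_mat (length xs) (length xs)"
    by (simp add: gram_mat_def)
  then have "u \<bullet> ((gram_mat k xs + lam \<cdot>\<^sub>m 1\<^sub>m (length xs)) *\<^sub>v u) = u \<bullet> (gram_mat k xs *\<^sub>v u) + lam * (u \<bullet> u)"
    using u by (simp add: add_mult_distrib_mat_vec smult_one_mat_mult_vec scalar_prod_add_distrib[of _ "length xs"])
  moreover have "0 \<le> u \<bullet> (gram_mat k xs *\<^sub>v u)"
    using assms unfolding gram_mat_quadratic_form[OF u] pos_semidef_kernel_def by blast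
  ultimately show ?thesis by simp
qed

lemma scalar_prod_self_eq_0_iff:
  fixes v :: "real vec"
  assumes "v \<in> carrier_vec n"
  shows "v \<bullet> v = 0 \<longleftrightarrow> v = 0\<^sub>v n"
proof
  assume "v \<bullet> v = 0"
  then have "\<forall>j\<in>{..<n}. (v $ j)\<^sup>2 = 0"
    using assms by (subst (asm) scalar_prod_self_eq_sum, subst (asm) sum_nonneg_eq_0_iff) auto
  then show "v = 0\<^sub>v n"
    using assms by (intro eq_vecI) auto
qed simp

lemma reg_gram_inverse:
  assumes "pos_semidef_kernel k" "0 < lam"
  shows "reg_inv k lam xs \<in> carrier_mat (length xs) (length xs)"
    and "(gram_mat k xs + lam \<cdot>\<^sub>m 1\<^sub>m (length xs)) * reg_inv k lam xs = 1\<^sub>m (length xs)"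
proof -
  let ?n = "length xs" and ?A = "gram_mat k xs + lam \<cdot>\<^sub>m 1\<^sub>m (length xs)"
  have A: "?A \<in> carrier_mat ?n ?n"
    by (simp add: gram_mat_def)
  have "det ?A \<noteq> 0"
  proof
    assume "det ?A = 0"
    then obtain u where u: "u \<in> carrier_vec ?n" "u \<noteq> 0\<^sub>v ?n" "?A *\<^sub>v u = 0\<^sub>v ?n"
      using det_0_iff_vec_prod_zero[OF A] by blast
    have "lam * (u \<bullet> u) \<le> 0"
      using reg_gram_quadratic_form_ge[OF assms(1) u(1), of lam] u(1,3) by simp
    moreover have "0 \<le> u \<bullet> u"
      by (simp add: scalar_prod_self_eq_sum sum_nonneg)
    ultimately have "u \<bullet> u = 0"
      using assms(2) by (simp add: mult_le_0_iff)
    with u(1,2) show False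
      by (simp add: scalar_prod_self_eq_0_iff)
  qed
  then have "mat_inverse ?A \<noteq> None"
    using mat_inverse(1)[OF A, where b = "()"] det_non_zero_imp_unit[OF A, where b = "()"] by blast
  then obtain R where "mat_inverse ?A = Some R"
    by blast
  then show "reg_inv k lam xs \<in> carrier_mat ?n ?n" "?A * reg_inv k lam xs = 1\<^sub>m ?n"
    using mat_inverse(2)[OF A] unfolding reg_inv_def by auto
qed

lemma norm_reg_inv_mult_vec_le:
  assumes "pos_semidef_kernel k" "0 < lam" and v: "v \<in> carrier_vec (length xs)"
  shows "lam * sqrt ((reg_inv k lam xs *\<^sub>v v) \<bullet> (reg_inv k lam xs *\<^sub>v v)) \<le> sqrt (v \<bullet> v)"
proof -
  let ?n = "length xs" and ?A = "gram_mat k xs + lam \<cdot>\<^sub>m 1\<^sub>m (length xs)"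
  define w where "w = reg_inv k lam xs *\<^sub>v v"
  have w: "w \<in> carrier_vec ?n"
    unfolding w_def using reg_gram_inverse(1)[OF assms(1,2), of xs] v by simp
  have "?A *\<^sub>v w = v"
    unfolding w_def using reg_gram_inverse[OF assms(1,2), of xs] v
    by (simp add: assoc_mult_mat_vec[symmetric, of _ ?n ?n _ ?n] gram_mat_def)
  then have "lam * (w \<bullet> w) \<le> w \<bullet> v"
    using reg_gram_quadratic_form_ge[OF assms(1) w, of lam] by simp
  also have "\<dots> \<le> sqrt (w \<bullet> w) * sqrt (v \<bullet> v)"
    using abs_scalar_prod_le[OF w v] by simp
  also have "lam * (w \<bullet> w) = sqrt (w \<bullet> w) * (lam * sqrt (w \<bullet> w))"
    by (simp add: scalar_prod_self_eq_sum sum_nonneg mult.left_commute[of _ lam])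
  finally have "sqrt (w \<bullet> w) * (lam * sqrt (w \<bullet> w)) \<le> sqrt (w \<bullet> w) * sqrt (v \<bullet> v)" .
  moreover have "0 \<le> w \<bullet> w" "0 \<le> v \<bullet> v"
    by (simp_all add: scalar_prod_self_eq_sum sum_nonneg)
  ultimately show ?thesis
    unfolding w_def[symmetric] by (cases "w \<bullet> w = 0") (auto simp: mult_le_cancel_left_pos)
qed

lemma abs_kvec_reg_inv_mult_vec_le:
  assumes "pos_semidef_kernel k" "0 < lam"
    and k_le: "\<And>j. j < length xs \<Longrightarrow> \<bar>k (xs ! j) x\<bar> \<le> 1"
    and v: "v \<in> carrier_vec (length xs)" and vB: "\<And>j. j < length xs \<Longrightarrow> \<bar>v $ j\<bar> \<le> B"
  shows "\<bar>kvec k xs x \<bullet> (reg_inv k lam xs *\<^sub>v v)\<bar> \<le> length xs / lam * B"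
proof (cases "xs = []")
  case True
  then show ?thesis
    using reg_gram_inverse(1)[OF assms(1,2), of xs] by (simp add: scalar_prod_def)
next
  case False
  let ?n = "length xs" and ?w = "reg_inv k lam xs *\<^sub>v v"
  have "0 \<le> B"
    using vB[of 0] False by (simp add: order_trans[OF abs_ge_zero])
  have kvec: "kvec k xs x \<in> carrier_vec ?n"
    by (simp add: kvec_def)
  have w: "?w \<in> carrier_vec ?n"
    using reg_gram_inverse(1)[OF assms(1,2), of xs] v by simp
  have "\<bar>kvec k xs x \<bullet> ?w\<bar> \<le> sqrt (kvec k xs x \<bullet> kvec k xs x) * sqrt (?w \<bullet> ?w)"
    by (rule abs_scalar_prod_le[OF kvec w])
  also have "\<dots> \<le> sqrt (?n * 1\<^sup>2) * (sqrt (?n * B\<^sup>2) / lam)"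
  proof (intro mult_mono real_sqrt_le_mono)
    show "kvec k xs x \<bullet> kvec k xs x \<le> ?n * 1\<^sup>2"
      using scalar_prod_self_le[of "kvec k xs x" 1] k_le by (simp add: kvec_def)
    have "sqrt (?w \<bullet> ?w) \<le> sqrt (v \<bullet> v) / lam"
      using norm_reg_inv_mult_vec_le[OF assms(1,2) v] assms(2) by (simp add: field_simps)
    also have "\<dots> \<le> sqrt (?n * B\<^sup>2) / lam"
      using scalar_prod_self_le[of v B] vB v assms(2) by (simp add: divide_right_mono)
    finally show "sqrt (?w \<bullet> ?w) \<le> sqrt (?n * B\<^sup>2) / lam" .
  qed (simp_all add: scalar_prod_self_eq_sum sum_nonneg)
  also have "\<dots> = ?n / lam * B"
    using \<open>0 \<le> B\<close> by (simp add: real_sqrt_mult)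
  finally show ?thesis .
qed

lemma post_mean_diff_eq:
  assumes "pos_semidef_kernel k" "0 < lam" "length ys = length xs" "length zs = length xs"
  shows "post_mean k lam xs ys x - post_mean k lam xs zs x
         = kvec k xs x \<bullet> (reg_inv k lam xs *\<^sub>v (vec_of_list ys - vec_of_list zs))"
proof -
  have R: "reg_inv k lam xs \<in> carrier_mat (length xs) (length xs)"
    by (rule reg_gram_inverse(1)[OF assms(1,2)])
  have "kvec k xs x \<in> carrier_vec (length xs)" "vec_of_list ys \<in> carrier_vec (length xs)"
    "vec_of_list zs \<in> carrier_vec (length xs)"
    using assms(3,4) by (simp_all add: kvec_def carrier_vecI)
  then show ?thesis
    using R unfolding post_mean_def
    by (simp add: mult_minus_distrib_mat_vec[OF R] scalar_prod_minus_distrib[of _ "length xs"])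
qed

lemma abs_post_mean_diff_le:
  assumes "pos_semidef_kernel k" "0 < lam" "length ys = length xs" "length zs = length xs"
    and "\<And>j. j < length xs \<Longrightarrow> \<bar>k (xs ! j) x\<bar> \<le> 1"
    and "\<And>j. j < length xs \<Longrightarrow> \<bar>ys ! j - zs ! j\<bar> \<le> B"
  shows "\<bar>post_mean k lam xs ys x - post_mean k lam xs zs x\<bar> \<le> length xs / lam * B"
  unfolding post_mean_diff_eq[OF assms(1-4)]
  using assms by (intro abs_kvec_reg_inv_mult_vec_le) (auto simp: vec_of_list_index carrier_vecI)

lemma borel_measurable_post_mean:
  assumes "\<And>j. j < n \<Longrightarrow> h j \<in> borel_measurable M"
  shows "(\<lambda>\<omega>. post_mean k lam xs (map (\<lambda>j. h j \<omega>) [0..<n]) x) \<in> borel_measurable M"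
proof -
  let ?R = "reg_inv k lam xs"
  have "post_mean k lam xs (map (\<lambda>j. h j \<omega>) [0..<n]) x
      = (\<Sum>i<dim_row ?R. kvec k xs x $ i * (\<Sum>j<n. row ?R i $ j * h j \<omega>))" for \<omega>
    unfolding post_mean_def by (simp add: scalar_prod_def lessThan_atLeast0 vec_of_list_index)
  then show ?thesis
    using assms by simp
qed

section \<open>Acquisition functions\<close>

lemma acq_diff_eq:
  "acq k sig lam tau beta nu M w Xm Y Xh Yh x - acq k sig lam tau beta nu M w Xm Z Xh Yh x
   = nu * (\<Sum>i<M. w i * (post_mean k (sig\<^sup>2) (Xm i) (Y i) x - post_mean k (sig\<^sup>2) (Xm i) (Z i) x))"
proof -
  have "(\<Sum>i<M. w i * (post_mean k (sig\<^sup>2) (Xm i) (Y i) x + tau * post_sd k (sig\<^sup>2) (Xm i) x))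
      - (\<Sum>i<M. w i * (post_mean k (sig\<^sup>2) (Xm i) (Z i) x + tau * post_sd k (sig\<^sup>2) (Xm i) x))
      = (\<Sum>i<M. w i * (post_mean k (sig\<^sup>2) (Xm i) (Y i) x - post_mean k (sig\<^sup>2) (Xm i) (Z i) x))"
    by (simp add: sum_subtractf[symmetric] algebra_simps)
  then show ?thesis
    unfolding acq_def by (simp add: algebra_simps)
qed

lemma abs_acq_diff_le:
  assumes "pos_semidef_kernel k" "0 < sig" "0 \<le> nu" "\<And>a. \<bar>k a x\<bar> \<le> 1"
    and w: "\<And>i. i < M \<Longrightarrow> 0 \<le> w i"
    and len: "\<And>i. i < M \<Longrightarrow> length (Y i) = length (Xm i)" "\<And>i. i < M \<Longrightarrow> length (Z i) = length (Xm i)"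
    and B: "\<And>i j. i < M \<Longrightarrow> j < length (Xm i) \<Longrightarrow> \<bar>Y i ! j - Z i ! j\<bar> \<le> B i"
  shows "\<bar>acq k sig lam tau beta nu M w Xm Y Xh Yh x - acq k sig lam tau beta nu M w Xm Z Xh Yh x\<bar>
         \<le> nu * (\<Sum>i<M. w i * (length (Xm i) / sig\<^sup>2 * B i))"
proof -
  have "\<bar>\<Sum>i<M. w i * (post_mean k (sig\<^sup>2) (Xm i) (Y i) x - post_mean k (sig\<^sup>2) (Xm i) (Z i) x)\<bar>
      \<le> (\<Sum>i<M. w i * \<bar>post_mean k (sig\<^sup>2) (Xm i) (Y i) x - post_mean k (sig\<^sup>2) (Xm i) (Z i) x\<bar>)"
    using w by (auto intro: order_trans[OF sum_abs] simp: abs_mult)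
  also have "\<dots> \<le> (\<Sum>i<M. w i * (length (Xm i) / sig\<^sup>2 * B i))"
    using assms by (intro sum_mono mult_left_mono abs_post_mean_diff_le) auto
  finally show ?thesis
    unfolding acq_diff_eq using assms(3) by (simp add: abs_mult mult_left_mono)
qed

lemma abs_acq_diff_le_of_noise_gap:
  fixes e e' :: "nat \<Rightarrow> nat \<Rightarrow> real" and n :: "nat \<Rightarrow> nat"
  assumes "pos_semidef_kernel k" "0 < sig" "0 \<le> nu" "\<And>a. \<bar>k a x\<bar> \<le> 1"
    and w: "\<And>i. i < M \<Longrightarrow> 0 \<le> w i" and len: "\<And>i. length (Xm i) = n i"
    and gap: "(\<Sum>i<M. w i * real (n i) * Max ((\<lambda>j. \<bar>e i j - e' i j\<bar>) ` {..<n i}))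
              \<le> (\<Sum>i<M. w i * real (n i) * a i)"
  shows "\<bar>acq k sig lam tau beta nu M w Xm (\<lambda>i. map (\<lambda>j. g i (xm i j) + e i j) [0..<n i]) Xh Yh x
          - acq k sig lam tau beta nu M w Xm (\<lambda>i. map (\<lambda>j. f (xm i j) + e' i j) [0..<n i]) Xh Yh x\<bar>
         \<le> nu * (\<Sum>i<M. w i * (real (n i) / sig\<^sup>2)
                     * (a i + Max ((\<lambda>j. \<bar>f (xm i j) - g i (xm i j)\<bar>) ` {..<n i})))"
proof -
  define m where "m i = Max ((\<lambda>j. \<bar>e i j - e' i j\<bar>) ` {..<n i})" for i
  define d where "d i = Max ((\<lambda>j. \<bar>f (xm i j) - g i (xm i j)\<bar>) ` {..<n i})" for i
  have dev: "\<bar>(g i (xm i j) + e i j) - (f (xm i j) + e' i j)\<bar> \<le> m i + d i" if "j < n i" for i j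
  proof -
    have "\<bar>e i j - e' i j\<bar> \<le> m i" "\<bar>f (xm i j) - g i (xm i j)\<bar> \<le> d i"
      unfolding m_def d_def using that by (intro Max_ge; auto)+
    then show ?thesis
      by simp
  qed
  have split: "(\<Sum>i<M. w i * (real (n i) / sig\<^sup>2 * (z i + d i)))
      = (\<Sum>i<M. w i * real (n i) * z i) / sig\<^sup>2 + (\<Sum>i<M. w i * (real (n i) / sig\<^sup>2) * d i)" for z
    by (simp add: sum.distrib sum_divide_distrib algebra_simps add_divide_distrib)
  have "\<bar>acq k sig lam tau beta nu M w Xm (\<lambda>i. map (\<lambda>j. g i (xm i j) + e i j) [0..<n i]) Xh Yh x
        - acq k sig lam tau beta nu M w Xm (\<lambda>i. map (\<lambda>j. f (xm i j) + e' i j) [0..<n i]) Xh Yh x\<bar>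
      \<le> nu * (\<Sum>i<M. w i * (real (n i) / sig\<^sup>2 * (m i + d i)))"
    using abs_acq_diff_le[OF assms(1-4), where B = "\<lambda>i. m i + d i" and M = M and w = w and Xm = Xm
        and lam = lam and tau = tau and beta = beta and Xh = Xh and Yh = Yh
        and Y = "\<lambda>i. map (\<lambda>j. g i (xm i j) + e i j) [0..<n i]"
        and Z = "\<lambda>i. map (\<lambda>j. f (xm i j) + e' i j) [0..<n i]"] w dev
    by (simp add: len)
  also have "(\<Sum>i<M. w i * (real (n i) / sig\<^sup>2 * (m i + d i)))
      = (\<Sum>i<M. w i * real (n i) * m i) / sig\<^sup>2 + (\<Sum>i<M. w i * (real (n i) / sig\<^sup>2) * d i)"
    by (rule split)
  also have "\<dots> \<le> (\<Sum>i<M. w i * real (n i) * a i) / sig\<^sup>2 + (\<Sum>i<M. w i * (real (n i) / sig\<^sup>2) * d i)"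
    using gap assms(2) unfolding m_def by (simp add: divide_right_mono)
  also have "\<dots> = (\<Sum>i<M. w i * (real (n i) / sig\<^sup>2) * (a i + d i))"
    unfolding split[of a, symmetric] by (simp add: mult.assoc)
  finally show ?thesis
    using assms(3) unfolding d_def by (simp add: mult_left_mono order_trans)
qed

lemma sets_abs_acq_diff_le:
  fixes beta nu :: "nat \<Rightarrow> real" and Y Z :: "nat \<Rightarrow> nat \<Rightarrow> 'w \<Rightarrow> real"
  assumes "finite D"
    and Y: "\<And>i j. i < M \<Longrightarrow> j < n i \<Longrightarrow> Y i j \<in> borel_measurable P"
    and Z: "\<And>i j. i < M \<Longrightarrow> j < n i \<Longrightarrow> Z i j \<in> borel_measurable P"
  shows "{\<omega> \<in> space P. \<forall>t\<ge>1. \<forall>x\<in>D.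
          \<bar>acq k sig lam tau (beta t) (nu t) M w Xm (\<lambda>i. map (\<lambda>j. Y i j \<omega>) [0..<n i]) (Xh t \<omega>) (Yh t \<omega>) x
           - acq k sig lam tau (beta t) (nu t) M w Xm (\<lambda>i. map (\<lambda>j. Z i j \<omega>) [0..<n i]) (Xh t \<omega>) (Yh t \<omega>) x\<bar>
          \<le> nu t * alpha} \<in> sets P"
proof -
  have [measurable]:
    "(\<lambda>\<omega>. post_mean k (sig\<^sup>2) (Xm i) (map (\<lambda>j. Y i j \<omega>) [0..<n i]) x) \<in> borel_measurable P"
    "(\<lambda>\<omega>. post_mean k (sig\<^sup>2) (Xm i) (map (\<lambda>j. Z i j \<omega>) [0..<n i]) x) \<in> borel_measurable P"
    if "i < M" for i x
    using that Y Z by (intro borel_measurable_post_mean; simp)+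
  note assms(1)[measurable]
  show ?thesis
    unfolding acq_diff_eq by measurable
qed

theorem lemma3:
  fixes P :: "'\<omega> measure"
    and D :: "(real ^ 'd) set"
    and s l sig lam tau delta :: real
    and beta nu :: "nat \<Rightarrow> real"
    and M :: nat and N :: "nat \<Rightarrow> nat" and w :: "nat \<Rightarrow> real"
    and f :: "real ^ 'd \<Rightarrow> real" and fm :: "nat \<Rightarrow> real ^ 'd \<Rightarrow> real"
    and xm :: "nat \<Rightarrow> nat \<Rightarrow> real ^ 'd"
    and eps epst :: "nat \<Rightarrow> nat \<Rightarrow> '\<omega> \<Rightarrow> real"
    and xq :: "nat \<Rightarrow> '\<omega> \<Rightarrow> real ^ 'd" and epsq :: "nat \<Rightarrow> '\<omega> \<Rightarrow> real"
  assumes "prob_space P"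
    and "finite D"
    and "0 < s" "s \<le> 1" "0 < l"
    and "0 < sig" "0 < lam" "0 < tau"
    and "0 < delta" "delta < 1"
    and "\<And>t. 0 < beta t"
    and "\<And>t. 0 \<le> nu t \<and> nu t \<le> 1"
    and "\<And>i. i < M \<Longrightarrow> 0 \<le> w i"
    and "(\<Sum>i<M. w i) = 1"
    and "\<And>i. i < M \<Longrightarrow> 0 < N i"
    and "prob_space.indep_vars P (\<lambda>_. borel)
           (\<lambda>(b, i, j). if b then epst i j else eps i j)
           {(b, i, j). i < M \<and> j < N i}"
    and "\<And>i j. i < M \<Longrightarrow> j < N i \<Longrightarrow>
           distributed P lborel (eps i j) (normal_density 0 sig)"
    and "\<And>i j. i < M \<Longrightarrow> j < N i \<Longrightarrow>
           distributed P lborel (epst i j) (normal_density 0 sig)"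
  shows
    "let k = se_kernel s l;
         Xm = meta_inputs xm N;
         Ybar = (\<lambda>\<omega> i. map (\<lambda>j. fm i (xm i j) + eps i j \<omega>) [0..<N i]);
         Ytil = (\<lambda>\<omega> i. map (\<lambda>j. f (xm i j) + epst i j \<omega>) [0..<N i]);
         Xh = (\<lambda>t \<omega>. map (\<lambda>u. xq u \<omega>) [1..<t]);
         Yh = (\<lambda>t \<omega>. map (\<lambda>u. f (xq u \<omega>) + epsq u \<omega>) [1..<t]);
         d = (\<lambda>i. Max ((\<lambda>j. \<bar>f (xm i j) - fm i (xm i j)\<bar>) ` {..<N i}));
         alpha = (\<Sum>i<M. w i * (real (N i) / sig\<^sup>2)
                    * (2 * sqrt (2 * sig\<^sup>2 * ln (8 * real (N i) / delta)) + d i))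
     in measure P {\<omega> \<in> space P. \<forall>t\<ge>1. \<forall>x\<in>D.
          \<bar>acq k sig lam tau (beta t) (nu t) M w Xm (Ybar \<omega>) (Xh t \<omega>) (Yh t \<omega>) x
           - acq k sig lam tau (beta t) (nu t) M w Xm (Ytil \<omega>) (Xh t \<omega>) (Yh t \<omega>) x\<bar>
          \<le> nu t * alpha} \<ge> 1 - delta / 4"
proof -
  interpret prob_space P by fact
  define G where "G = {\<omega> \<in> space P.
      (\<Sum>i<M. w i * real (N i) * Max ((\<lambda>j. \<bar>eps i j \<omega> - epst i j \<omega>\<bar>) ` {..<N i}))
        \<le> (\<Sum>i<M. w i * real (N i) * (2 * sqrt (2 * sig\<^sup>2 * ln (8 * real (N i) / delta))))}"
  have G_prob: "1 - delta / 4 \<le> measure P G"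
    using measure_weighted_max_abs_diff_normal_ge[where I = "{..<M}" and \<epsilon> = "delta / 4"
        and c = "\<lambda>i. w i * real (N i)" and X = eps and Y = epst] assms
    by (simp add: G_def)
  have kernel: "pos_semidef_kernel (se_kernel s l)" "\<And>a b. \<bar>se_kernel s l a b\<bar> \<le> 1"
    using assms(3,4) by (simp_all add: pos_semidef_kernel_se_kernel abs_se_kernel_le_1)
  have noise_meas: "eps i j \<in> borel_measurable P" "epst i j \<in> borel_measurable P"
    if "i < M" "j < N i" for i j
    using distributed_measurable[OF assms(17)[OF that]] distributed_measurable[OF assms(18)[OF that]]
    by simp_all
  show ?thesis
    unfolding Let_def
    apply (rule order_trans[OF G_prob finite_measure_mono])
    subgoal
      unfolding G_def using kernel assms(6,12,13)
      by (intro subsetI CollectI conjI allI impI ballI abs_acq_diff_le_of_noise_gap)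
        (auto simp: meta_inputs_def)
    subgoal
      using assms(2) noise_meas by (intro sets_abs_acq_diff_le) auto
    done
qed

end
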